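(* Let $\Bbbk$ be an algebraically closed field of characteristic zero, $G$ a finite abelian group, $u\in G$ of order $2$, and $V$ a finite-dimensional $\Bbbk G$-module with $u\cdot v=-v$ for all $v\in V$. Let $(T,\beta,\alpha,\psi)$ and $(T',\beta',\alpha',\psi')$ be compatible data. Then: (1) $(T\circ T',\beta\circ T'+\beta',\alpha\circ\alpha',\psi\psi')$ is a compatible datum; (2) the set of compatible data with the product $$(T,\beta,\alpha,\psi)\bullet(T',\beta',\alpha',\psi')=(T\circ T',\beta\circ T'+\beta',\alpha\circ\alpha',\psi\psi')$$ is a group with identity $(\mathrm{Id}_V,0,\mathrm{id}_G,1)$.
   Context: A compatible datum $(T,\beta,\alpha,\psi)$ consists of: a group automorphism $\alpha:G\to G$ with $\alpha(u)=u$; a linear automorphism $T:V\to V$ with $T(g\cdot v)=\alpha(g)\cdot T(v)$ for all $v\in V$, $g\in G$; a symmetric $G$-invariant bilinear form $\beta:V\times V\to\Bbbk$; and $\psi\in H^2(G,\Bbbk^\times)$. Here $(\beta\circ T')(v,w)=\beta(T'(v),T'(w))$ and $\psi\psi'$ is the product in $H^2(G,\Bbbk^\times)$. *)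

theory Defs
  imports "HOL-Algebra.Multiplicative_Group" "HOL-Computational_Algebra.Polynomial"
begin

text \<open>Normalisation-free 2-cocycles of G with values in the multiplicative group
  of the field; only their values on the carrier matter.\<close>
definition cocycles2 :: "('g, 'm) monoid_scheme \<Rightarrow> ('g \<Rightarrow> 'g \<Rightarrow> 'k::field) set" where
  "cocycles2 G = {c. (\<forall>x\<in>carrier G. \<forall>y\<in>carrier G. c x y \<noteq> 0) \<and>
     (\<forall>x\<in>carrier G. \<forall>y\<in>carrier G. \<forall>z\<in>carrier G.
        c x y * c (x \<otimes>\<^bsub>G\<^esub> y) z = c y z * c x (y \<otimes>\<^bsub>G\<^esub> z))}"

definition cohomologous :: "('g, 'm) monoid_scheme \<Rightarrow> (('g \<Rightarrow> 'g \<Rightarrow> 'k::field) \<times> ('g \<Rightarrow> 'g \<Rightarrow> 'k)) set" where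
  "cohomologous G = {(c, c'). c \<in> cocycles2 G \<and> c' \<in> cocycles2 G \<and>
     (\<exists>f. (\<forall>x\<in>carrier G. f x \<noteq> 0) \<and>
        (\<forall>x\<in>carrier G. \<forall>y\<in>carrier G. c' x y = c x y * f x * f y / f (x \<otimes>\<^bsub>G\<^esub> y)))}"

definition H2 :: "('g, 'm) monoid_scheme \<Rightarrow> ('g \<Rightarrow> 'g \<Rightarrow> 'k::field) set set" where
  "H2 G = cocycles2 G // cohomologous G"

definition H2_mult :: "('g, 'm) monoid_scheme \<Rightarrow> ('g \<Rightarrow> 'g \<Rightarrow> 'k::field) set
    \<Rightarrow> ('g \<Rightarrow> 'g \<Rightarrow> 'k) set \<Rightarrow> ('g \<Rightarrow> 'g \<Rightarrow> 'k) set" where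
  "H2_mult G \<psi> \<psi>' = cohomologous G ``
     {(\<lambda>x y. (SOME c. c \<in> \<psi>) x y * (SOME c. c \<in> \<psi>') x y)}"

definition H2_one :: "('g, 'm) monoid_scheme \<Rightarrow> ('g \<Rightarrow> 'g \<Rightarrow> 'k::field) set" where
  "H2_one G = cohomologous G `` {(\<lambda>x y. 1)}"

type_synonym ('v, 'k, 'g) datum =
  "('v \<Rightarrow> 'v) \<times> ('v \<Rightarrow> 'v \<Rightarrow> 'k) \<times> ('g \<Rightarrow> 'g) \<times> ('g \<Rightarrow> 'g \<Rightarrow> 'k) set"

text \<open>Group automorphisms alpha are taken
  extensional on the carrier (functions G \<rightarrow> G).\<close>
definition compatible_datum ::
  "('g, 'm) monoid_scheme \<Rightarrow> 'g \<Rightarrow> ('k::field \<Rightarrow> 'v \<Rightarrow> 'v::ab_group_add)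
     \<Rightarrow> ('g \<Rightarrow> 'v \<Rightarrow> 'v) \<Rightarrow> ('v, 'k, 'g) datum \<Rightarrow> bool" where
  "compatible_datum G u scale act d = (case d of (T, \<beta>, \<alpha>, \<psi>) \<Rightarrow>
     \<alpha> \<in> iso G G \<and> \<alpha> \<in> extensional (carrier G) \<and> \<alpha> u = u \<and>
     Vector_Spaces.linear scale scale T \<and> bij T \<and>
     (\<forall>g\<in>carrier G. \<forall>v. T (act g v) = act (\<alpha> g) (T v)) \<and>
     (\<forall>v w. \<beta> v w = \<beta> w v) \<and>
     (\<forall>v. Vector_Spaces.linear scale (*) (\<beta> v)) \<and> (\<forall>w. Vector_Spaces.linear scale (*) (\<lambda>v. \<beta> v w)) \<and>
     (\<forall>g\<in>carrier G. \<forall>v w. \<beta> (act g v) (act g w) = \<beta> v w) \<and>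
     \<psi> \<in> H2 G)"

definition datum_mult ::
  "('g, 'm) monoid_scheme \<Rightarrow> ('v, 'k::field, 'g) datum \<Rightarrow> ('v, 'k, 'g) datum \<Rightarrow> ('v, 'k, 'g) datum" where
  "datum_mult G d d' = (case d of (T, \<beta>, \<alpha>, \<psi>) \<Rightarrow> case d' of (T', \<beta>', \<alpha>', \<psi>') \<Rightarrow>
     (T \<circ> T', (\<lambda>v w. \<beta> (T' v) (T' w) + \<beta>' v w), compose (carrier G) \<alpha> \<alpha>', H2_mult G \<psi> \<psi>'))"

definition datum_one :: "('g, 'm) monoid_scheme \<Rightarrow> ('v, 'k::field, 'g) datum" where
  "datum_one G = (id, (\<lambda>v w. 0), restrict id (carrier G), H2_one G)"

definition compatible_data_monoid ::
  "('g, 'm) monoid_scheme \<Rightarrow> 'g \<Rightarrow> ('k::field \<Rightarrow> 'v \<Rightarrow> 'v::ab_group_add)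
     \<Rightarrow> ('g \<Rightarrow> 'v \<Rightarrow> 'v) \<Rightarrow> ('v, 'k, 'g) datum monoid" where
  "compatible_data_monoid G u scale act =
     \<lparr>carrier = {d. compatible_datum G u scale act d},
      monoid.mult = datum_mult G, one = datum_one G\<rparr>"

end

theory Submission
  imports Defs
begin

(* Closure under the product is componentwise: T o T' intertwines the action along alpha o alpha',
   and beta o T' is G-invariant because T' turns the action of g into that of alpha' g, under which
   beta is invariant.  The group laws hold componentwise as well: H^2(G, k^x) is a group under
   pointwise multiplication of representatives, composition of automorphisms is associative, and
   both bracketings of a triple product carry the form beta o T' o T'' + beta' o T'' + beta''.
   The inverse of (T, beta, alpha, psi) is (T^-1, -beta o T^-1, alpha^-1, psi^-1). *)

section \<open>The cohomology group H^2(G, k^x)\<close>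

lemma cocycles2_mult:
  assumes "a \<in> cocycles2 G" "b \<in> cocycles2 G"
  shows "(\<lambda>x y. a x y * b x y) \<in> cocycles2 G"
proof -
  have "a x y * b x y * (a (x \<otimes>\<^bsub>G\<^esub> y) z * b (x \<otimes>\<^bsub>G\<^esub> y) z)
      = a y z * b y z * (a x (y \<otimes>\<^bsub>G\<^esub> z) * b x (y \<otimes>\<^bsub>G\<^esub> z))"
    if "x \<in> carrier G" "y \<in> carrier G" "z \<in> carrier G" for x y z
  proof -
    have "a x y * a (x \<otimes>\<^bsub>G\<^esub> y) z = a y z * a x (y \<otimes>\<^bsub>G\<^esub> z)"
      and "b x y * b (x \<otimes>\<^bsub>G\<^esub> y) z = b y z * b x (y \<otimes>\<^bsub>G\<^esub> z)"
      using assms that unfolding cocycles2_def by blast+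
    then have "(a x y * a (x \<otimes>\<^bsub>G\<^esub> y) z) * (b x y * b (x \<otimes>\<^bsub>G\<^esub> y) z)
        = (a y z * a x (y \<otimes>\<^bsub>G\<^esub> z)) * (b y z * b x (y \<otimes>\<^bsub>G\<^esub> z))"
      by simp
    then show ?thesis by (simp add: ac_simps)
  qed
  then show ?thesis using assms unfolding cocycles2_def by auto
qed

lemma cocycles2_inverse:
  assumes "a \<in> cocycles2 G"
  shows "(\<lambda>x y. inverse (a x y)) \<in> cocycles2 G"
  using assms unfolding cocycles2_def by (auto simp flip: inverse_mult_distrib)

lemma cocycles2_one: "(\<lambda>x y. 1) \<in> cocycles2 G"
  unfolding cocycles2_def by auto

lemma cohomologousI:
  assumes "a \<in> cocycles2 G" "b \<in> cocycles2 G" "\<And>x. x \<in> carrier G \<Longrightarrow> f x \<noteq> 0"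
    "\<And>x y. x \<in> carrier G \<Longrightarrow> y \<in> carrier G \<Longrightarrow> b x y = a x y * f x * f y / f (x \<otimes>\<^bsub>G\<^esub> y)"
  shows "(a, b) \<in> cohomologous G"
  using assms unfolding cohomologous_def by blast

lemma cohomologousE:
  assumes "(a, b) \<in> cohomologous G"
  obtains f where "a \<in> cocycles2 G" "b \<in> cocycles2 G" "\<And>x. x \<in> carrier G \<Longrightarrow> f x \<noteq> 0"
    "\<And>x y. x \<in> carrier G \<Longrightarrow> y \<in> carrier G \<Longrightarrow> b x y = a x y * f x * f y / f (x \<otimes>\<^bsub>G\<^esub> y)"
  using assms unfolding cohomologous_def by blast

lemma cohomologous_if_eq_on_carrier:
  assumes G: "monoid G" and a: "a \<in> cocycles2 G"
    and eq: "\<And>x y. x \<in> carrier G \<Longrightarrow> y \<in> carrier G \<Longrightarrow> b x y = a x y"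
  shows "(a, b) \<in> cohomologous G"
proof (rule cohomologousI[where f = "\<lambda>_. 1"])
  have "b x y * b (x \<otimes>\<^bsub>G\<^esub> y) z = b y z * b x (y \<otimes>\<^bsub>G\<^esub> z)"
    if "x \<in> carrier G" "y \<in> carrier G" "z \<in> carrier G" for x y z
  proof -
    have "a x y * a (x \<otimes>\<^bsub>G\<^esub> y) z = a y z * a x (y \<otimes>\<^bsub>G\<^esub> z)"
      using a that unfolding cocycles2_def by blast
    moreover have "x \<otimes>\<^bsub>G\<^esub> y \<in> carrier G" "y \<otimes>\<^bsub>G\<^esub> z \<in> carrier G"
      using that monoid.m_closed[OF G] by blast+
    ultimately show ?thesis
      using that by (simp only: eq)
  qed
  moreover have "b x y \<noteq> 0" if "x \<in> carrier G" "y \<in> carrier G" for x y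
    using a that unfolding cocycles2_def eq[OF that] by blast
  ultimately show "b \<in> cocycles2 G"
    unfolding cocycles2_def by blast
qed (simp_all add: a eq)

lemma cohomologous_sym:
  assumes G: "monoid G" and "(a, b) \<in> cohomologous G"
  shows "(b, a) \<in> cohomologous G"
proof -
  obtain f where a: "a \<in> cocycles2 G" and b: "b \<in> cocycles2 G"
    and f: "\<And>x. x \<in> carrier G \<Longrightarrow> f x \<noteq> 0"
    and b_eq: "\<And>x y. x \<in> carrier G \<Longrightarrow> y \<in> carrier G \<Longrightarrow> b x y = a x y * f x * f y / f (x \<otimes>\<^bsub>G\<^esub> y)"
    using assms(2) by (rule cohomologousE) (rule that)
  have a_eq: "a x y = b x y * inverse (f x) * inverse (f y) / inverse (f (x \<otimes>\<^bsub>G\<^esub> y))"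
    if "x \<in> carrier G" "y \<in> carrier G" for x y
  proof -
    have "f x \<noteq> 0" "f y \<noteq> 0" "f (x \<otimes>\<^bsub>G\<^esub> y) \<noteq> 0"
      using that f monoid.m_closed[OF G] by blast+
    then show ?thesis
      unfolding b_eq[OF that] by (simp add: field_simps)
  qed
  show ?thesis
    by (rule cohomologousI[OF b a, where f = "\<lambda>x. inverse (f x)"]) (simp_all add: f a_eq)
qed

lemma cohomologous_trans:
  assumes G: "monoid G" and "(a, b) \<in> cohomologous G" "(b, c) \<in> cohomologous G"
  shows "(a, c) \<in> cohomologous G"
proof -
  obtain f where a: "a \<in> cocycles2 G" and f: "\<And>x. x \<in> carrier G \<Longrightarrow> f x \<noteq> 0"
    and b_eq: "\<And>x y. x \<in> carrier G \<Longrightarrow> y \<in> carrier G \<Longrightarrow> b x y = a x y * f x * f y / f (x \<otimes>\<^bsub>G\<^esub> y)"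
    using assms(2) by (rule cohomologousE) (rule that)
  obtain g where c: "c \<in> cocycles2 G" and g: "\<And>x. x \<in> carrier G \<Longrightarrow> g x \<noteq> 0"
    and c_eq: "\<And>x y. x \<in> carrier G \<Longrightarrow> y \<in> carrier G \<Longrightarrow> c x y = b x y * g x * g y / g (x \<otimes>\<^bsub>G\<^esub> y)"
    using assms(3) by (rule cohomologousE) (rule that)
  have ac_eq: "c x y = a x y * (f x * g x) * (f y * g y) / (f (x \<otimes>\<^bsub>G\<^esub> y) * g (x \<otimes>\<^bsub>G\<^esub> y))"
    if "x \<in> carrier G" "y \<in> carrier G" for x y
  proof -
    have "f (x \<otimes>\<^bsub>G\<^esub> y) \<noteq> 0" "g (x \<otimes>\<^bsub>G\<^esub> y) \<noteq> 0"
      using that f g monoid.m_closed[OF G] by blast+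
    then show ?thesis
      unfolding c_eq[OF that] b_eq[OF that] by (simp add: field_simps)
  qed
  show ?thesis
    by (rule cohomologousI[OF a c, where f = "\<lambda>x. f x * g x"]) (simp_all add: f g ac_eq)
qed

lemma equiv_cohomologous:
  assumes "monoid G"
  shows "equiv (cocycles2 G) (cohomologous G)"
proof (rule equivI)
  show "cohomologous G \<subseteq> cocycles2 G \<times> cocycles2 G"
    by (auto simp: cohomologous_def)
  show "refl_on (cocycles2 G) (cohomologous G)"
    using assms cohomologous_if_eq_on_carrier by (blast intro: refl_onI)
  show "sym (cohomologous G)"
    unfolding sym_def using assms cohomologous_sym by blast
  show "trans (cohomologous G)"
    unfolding trans_def using assms cohomologous_trans by blast
qed

lemma cohomologous_mult:
  assumes G: "monoid G" and "(a, b) \<in> cohomologous G" "(c, d) \<in> cohomologous G"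
  shows "((\<lambda>x y. a x y * c x y), (\<lambda>x y. b x y * d x y)) \<in> cohomologous G"
proof -
  obtain f where a: "a \<in> cocycles2 G" and b: "b \<in> cocycles2 G"
    and f: "\<And>x. x \<in> carrier G \<Longrightarrow> f x \<noteq> 0"
    and b_eq: "\<And>x y. x \<in> carrier G \<Longrightarrow> y \<in> carrier G \<Longrightarrow> b x y = a x y * f x * f y / f (x \<otimes>\<^bsub>G\<^esub> y)"
    using assms(2) by (rule cohomologousE) (rule that)
  obtain g where c: "c \<in> cocycles2 G" and d: "d \<in> cocycles2 G"
    and g: "\<And>x. x \<in> carrier G \<Longrightarrow> g x \<noteq> 0"
    and d_eq: "\<And>x y. x \<in> carrier G \<Longrightarrow> y \<in> carrier G \<Longrightarrow> d x y = c x y * g x * g y / g (x \<otimes>\<^bsub>G\<^esub> y)"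
    using assms(3) by (rule cohomologousE) (rule that)
  have bd_eq: "b x y * d x y
      = a x y * c x y * (f x * g x) * (f y * g y) / (f (x \<otimes>\<^bsub>G\<^esub> y) * g (x \<otimes>\<^bsub>G\<^esub> y))"
    if "x \<in> carrier G" "y \<in> carrier G" for x y
    unfolding b_eq[OF that] d_eq[OF that] by simp
  show ?thesis
    by (rule cohomologousI[OF cocycles2_mult[OF a c] cocycles2_mult[OF b d],
          where f = "\<lambda>x. f x * g x"])
      (simp_all add: f g bd_eq)
qed

lemma H2_mult_classes:
  assumes G: "monoid G" and a: "a \<in> cocycles2 G" and b: "b \<in> cocycles2 G"
  shows "H2_mult G (cohomologous G `` {a}) (cohomologous G `` {b})
    = cohomologous G `` {(\<lambda>x y. a x y * b x y)}"
proof -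
  have "(c, SOME c'. c' \<in> cohomologous G `` {c}) \<in> cohomologous G" if "c \<in> cocycles2 G" for c
    using someI[of "\<lambda>c'. c' \<in> cohomologous G `` {c}"] cohomologous_if_eq_on_carrier[OF G that]
    by blast
  then have "((\<lambda>x y. a x y * b x y),
      (\<lambda>x y. (SOME c. c \<in> cohomologous G `` {a}) x y * (SOME c. c \<in> cohomologous G `` {b}) x y))
      \<in> cohomologous G"
    using a b by (blast intro: cohomologous_mult[OF G])
  then show ?thesis
    unfolding H2_mult_def by (rule equiv_class_eq[OF equiv_cohomologous[OF G], symmetric])
qed

lemma H2E:
  assumes "\<psi> \<in> H2 G"
  obtains a where "a \<in> cocycles2 G" "\<psi> = cohomologous G `` {a}"
  using assms unfolding H2_def by (auto elim!: quotientE)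

lemma H2I: "a \<in> cocycles2 G \<Longrightarrow> cohomologous G `` {a} \<in> H2 G"
  unfolding H2_def by (rule quotientI)

definition H2_group :: "('g, 'm) monoid_scheme \<Rightarrow> ('g \<Rightarrow> 'g \<Rightarrow> 'k::field) set monoid" where
  "H2_group G = \<lparr>carrier = H2 G, monoid.mult = H2_mult G, one = H2_one G\<rparr>"

lemma H2_group_simps [simp]:
  "carrier (H2_group G) = H2 G" "monoid.mult (H2_group G) = H2_mult G" "one (H2_group G) = H2_one G"
  by (simp_all add: H2_group_def)

lemma group_H2_group:
  fixes G :: "('g, 'm) monoid_scheme"
  assumes G: "monoid G"
  shows "group (H2_group G :: ('g \<Rightarrow> 'g \<Rightarrow> 'k::field) set monoid)"
proof (rule groupI, unfold H2_group_simps)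
  fix \<psi> \<psi>' :: "('g \<Rightarrow> 'g \<Rightarrow> 'k) set" assume "\<psi> \<in> H2 G" "\<psi>' \<in> H2 G"
  then show "H2_mult G \<psi> \<psi>' \<in> H2 G"
    by (auto elim!: H2E simp: H2_mult_classes[OF G] intro!: H2I cocycles2_mult)
next
  show "H2_one G \<in> H2 G"
    unfolding H2_one_def by (rule H2I[OF cocycles2_one])
next
  fix \<psi> \<psi>' \<psi>'' :: "('g \<Rightarrow> 'g \<Rightarrow> 'k) set" assume "\<psi> \<in> H2 G" "\<psi>' \<in> H2 G" "\<psi>'' \<in> H2 G"
  then show "H2_mult G (H2_mult G \<psi> \<psi>') \<psi>'' = H2_mult G \<psi> (H2_mult G \<psi>' \<psi>'')"
    by (auto elim!: H2E simp: H2_mult_classes[OF G] cocycles2_mult mult.assoc)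
next
  fix \<psi> :: "('g \<Rightarrow> 'g \<Rightarrow> 'k) set" assume "\<psi> \<in> H2 G"
  then show "H2_mult G (H2_one G) \<psi> = \<psi>"
    by (auto elim!: H2E simp: H2_one_def H2_mult_classes[OF G] cocycles2_one)
next
  fix \<psi> :: "('g \<Rightarrow> 'g \<Rightarrow> 'k) set" assume "\<psi> \<in> H2 G"
  then obtain a where a: "a \<in> cocycles2 G" and \<psi>: "\<psi> = cohomologous G `` {a}"
    by (rule H2E)
  let ?a' = "\<lambda>x y. inverse (a x y)"
  have "((\<lambda>x y. 1), (\<lambda>x y. ?a' x y * a x y)) \<in> cohomologous G"
    using a by (intro cohomologous_if_eq_on_carrier[OF G cocycles2_one]) (simp add: cocycles2_def)
  then have "H2_mult G (cohomologous G `` {?a'}) \<psi> = H2_one G"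
    unfolding \<psi> H2_one_def H2_mult_classes[OF G cocycles2_inverse[OF a] a]
    by (rule equiv_class_eq[OF equiv_cohomologous[OF G], symmetric])
  then show "\<exists>\<phi>\<in>H2 G. H2_mult G \<phi> \<psi> = H2_one G"
    using H2I[OF cocycles2_inverse[OF a]] by blast
qed

context
  fixes G :: "('g, 'm) monoid_scheme"
  assumes G: "monoid G"
begin

interpretation H2: group "H2_group G :: ('g \<Rightarrow> 'g \<Rightarrow> 'k::field) set monoid"
  by (rule group_H2_group[OF G])

lemma H2_mult_closed: "\<psi> \<in> H2 G \<Longrightarrow> \<psi>' \<in> H2 G \<Longrightarrow> H2_mult G \<psi> \<psi>' \<in> H2 G"
  using H2.m_closed by simp

lemma H2_one_closed: "H2_one G \<in> H2 G"
  using H2.one_closed by simp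

lemma H2_mult_assoc:
  "\<psi> \<in> H2 G \<Longrightarrow> \<psi>' \<in> H2 G \<Longrightarrow> \<psi>'' \<in> H2 G
    \<Longrightarrow> H2_mult G (H2_mult G \<psi> \<psi>') \<psi>'' = H2_mult G \<psi> (H2_mult G \<psi>' \<psi>'')"
  using H2.m_assoc by simp

lemma H2_one_mult: "\<psi> \<in> H2 G \<Longrightarrow> H2_mult G (H2_one G) \<psi> = \<psi>"
  using H2.l_one by simp

lemma H2_inv_closed: "\<psi> \<in> H2 G \<Longrightarrow> inv\<^bsub>H2_group G\<^esub> \<psi> \<in> H2 G"
  using H2.inv_closed by simp

lemma H2_inv_mult: "\<psi> \<in> H2 G \<Longrightarrow> H2_mult G (inv\<^bsub>H2_group G\<^esub> \<psi>) \<psi> = H2_one G"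
  using H2.l_inv by simp

end

section \<open>Inverses and sums of linear maps\<close>

lemma linear_add:
  "Vector_Spaces.linear s1 s2 f \<Longrightarrow> Vector_Spaces.linear s1 s2 g
    \<Longrightarrow> Vector_Spaces.linear s1 s2 (\<lambda>x. f x + g x)"
  by (metis Vector_Spaces.linear_iff vector_space_pair.intro vector_space_pair.linear_compose_add)

lemma linear_neg:
  "Vector_Spaces.linear s1 s2 f \<Longrightarrow> Vector_Spaces.linear s1 s2 (\<lambda>x. - f x)"
  by (metis Vector_Spaces.linear_iff vector_space_pair.intro vector_space_pair.linear_compose_neg)

lemma linear_inv:
  assumes lin: "Vector_Spaces.linear s1 s2 T" and "bij T"
  shows "Vector_Spaces.linear s2 s1 (inv_into UNIV T)"
proof -
  have add: "T (x + y) = T x + T y" and scale: "T (s1 c x) = s2 c (T x)" for x y c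
    using lin unfolding Vector_Spaces.linear_iff by auto
  have "inv_into UNIV T (x + y) = inv_into UNIV T x + inv_into UNIV T y" for x y
    using bij_inv_eq_iff[OF \<open>bij T\<close>] surj_f_inv_f[OF bij_is_surj[OF \<open>bij T\<close>]] add by metis
  moreover have "inv_into UNIV T (s2 c x) = s1 c (inv_into UNIV T x)" for c x
    using bij_inv_eq_iff[OF \<open>bij T\<close>] surj_f_inv_f[OF bij_is_surj[OF \<open>bij T\<close>]] scale by metis
  ultimately show ?thesis
    using lin unfolding Vector_Spaces.linear_iff by blast
qed

section \<open>The group of compatible data\<close>

lemma iso_funcset: "\<alpha> \<in> iso G H \<Longrightarrow> \<alpha> \<in> carrier G \<rightarrow> carrier H"
  by (auto simp: iso_def hom_def)

lemma inv_into_intertwines: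
  assumes "bij T" "g \<in> \<alpha> ` A"
    and intertwines: "\<And>h v. h \<in> A \<Longrightarrow> T (act h v) = act (\<alpha> h) (T v)"
  shows "inv_into UNIV T (act g v) = act (inv_into A \<alpha> g) (inv_into UNIV T v)"
proof -
  have "T (act (inv_into A \<alpha> g) (inv_into UNIV T v)) = act g v"
    using intertwines[OF inv_into_into[OF assms(2)]] f_inv_into_f[OF assms(2)]
      surj_f_inv_f[OF bij_is_surj[OF \<open>bij T\<close>]] by simp
  then show ?thesis
    using bij_inv_eq_iff[OF \<open>bij T\<close>] by metis
qed

lemma compatible_datumI:
  assumes "\<alpha> \<in> iso G G" "\<alpha> \<in> extensional (carrier G)" "\<alpha> u = u"
    and "Vector_Spaces.linear scale scale T" "bij T"
    and "\<And>g v. g \<in> carrier G \<Longrightarrow> T (act g v) = act (\<alpha> g) (T v)"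
    and "\<And>v w. \<beta> v w = \<beta> w v"
    and "\<And>v. Vector_Spaces.linear scale (*) (\<beta> v)" "\<And>w. Vector_Spaces.linear scale (*) (\<lambda>v. \<beta> v w)"
    and "\<And>g v w. g \<in> carrier G \<Longrightarrow> \<beta> (act g v) (act g w) = \<beta> v w"
    and "\<psi> \<in> H2 G"
  shows "compatible_datum G u scale act (T, \<beta>, \<alpha>, \<psi>)"
  using assms unfolding compatible_datum_def by simp

context
  fixes G :: "('g, 'm) monoid_scheme" and u scale act T \<beta> \<alpha> \<psi>
  assumes d: "compatible_datum G u scale act (T, \<beta>, \<alpha>, \<psi>)"
begin

lemma compatible_datum_automorphism: "\<alpha> \<in> iso G G" "\<alpha> \<in> extensional (carrier G)" "\<alpha> u = u"
  using d by (simp_all add: compatible_datum_def)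

lemma compatible_datum_linear: "Vector_Spaces.linear scale scale T" "bij T"
  using d by (simp_all add: compatible_datum_def)

lemma compatible_datum_intertwines: "g \<in> carrier G \<Longrightarrow> T (act g v) = act (\<alpha> g) (T v)"
  using d by (simp add: compatible_datum_def)

lemma compatible_datum_form:
  "\<beta> v w = \<beta> w v" "Vector_Spaces.linear scale (*) (\<beta> v)" "Vector_Spaces.linear scale (*) (\<lambda>v. \<beta> v w)"
  "g \<in> carrier G \<Longrightarrow> \<beta> (act g v) (act g w) = \<beta> v w"
  using d by (simp_all add: compatible_datum_def)

lemma compatible_datum_H2: "\<psi> \<in> H2 G"
  using d by (simp add: compatible_datum_def)

end

lemma datum_mult_simps [simp]:
  "datum_mult G (T, \<beta>, \<alpha>, \<psi>) (T', \<beta>', \<alpha>', \<psi>')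
    = (T \<circ> T', (\<lambda>v w. \<beta> (T' v) (T' w) + \<beta>' v w), compose (carrier G) \<alpha> \<alpha>', H2_mult G \<psi> \<psi>')"
  by (simp add: datum_mult_def)

lemma compatible_datum_mult:
  assumes G: "group G" and u: "u \<in> carrier G"
    and d: "compatible_datum G u scale act (T, \<beta>, \<alpha>, \<psi>)"
    and d': "compatible_datum G u scale act (T', \<beta>', \<alpha>', \<psi>')"
  shows "compatible_datum G u scale act (datum_mult G (T, \<beta>, \<alpha>, \<psi>) (T', \<beta>', \<alpha>', \<psi>'))"
  unfolding datum_mult_simps
proof (rule compatible_datumI)
  note \<alpha> = compatible_datum_automorphism[OF d] and \<alpha>' = compatible_datum_automorphism[OF d']
  note T = compatible_datum_linear[OF d] and T' = compatible_datum_linear[OF d']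
  note \<beta> = compatible_datum_form[OF d] and \<beta>' = compatible_datum_form[OF d']
  have \<alpha>'_closed: "\<alpha>' g \<in> carrier G" if "g \<in> carrier G" for g
    using iso_funcset[OF \<alpha>'(1)] that by blast
  show "compose (carrier G) \<alpha> \<alpha>' \<in> iso G G"
    using group.iso_eq[OF G iso_set_trans[OF \<alpha>'(1) \<alpha>(1)]] by (simp add: compose_eq)
  show "compose (carrier G) \<alpha> \<alpha>' \<in> extensional (carrier G)"
    by simp
  show "compose (carrier G) \<alpha> \<alpha>' u = u"
    using u \<alpha>(3) \<alpha>'(3) by (simp add: compose_eq)
  show "Vector_Spaces.linear scale scale (T \<circ> T')"
    using Vector_Spaces.linear_compose[OF T'(1) T(1)] .
  show "bij (T \<circ> T')"
    using bij_comp[OF T'(2) T(2)] .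
  show "(T \<circ> T') (act g v) = act (compose (carrier G) \<alpha> \<alpha>' g) ((T \<circ> T') v)" if "g \<in> carrier G" for g v
    using that by (simp add: compose_eq \<alpha>'_closed compatible_datum_intertwines[OF d] compatible_datum_intertwines[OF d'])
  show "\<beta> (T' v) (T' w) + \<beta>' v w = \<beta> (T' w) (T' v) + \<beta>' w v" for v w
    using \<beta>(1) \<beta>'(1) by metis
  show "Vector_Spaces.linear scale (*) (\<lambda>w. \<beta> (T' v) (T' w) + \<beta>' v w)" for v
    using linear_add[OF Vector_Spaces.linear_compose[OF T'(1) \<beta>(2)] \<beta>'(2)] by (simp add: comp_def)
  show "Vector_Spaces.linear scale (*) (\<lambda>v. \<beta> (T' v) (T' w) + \<beta>' v w)" for w
    using linear_add[OF Vector_Spaces.linear_compose[OF T'(1) \<beta>(3)] \<beta>'(3)] by (simp add: comp_def)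
  show "\<beta> (T' (act g v)) (T' (act g w)) + \<beta>' (act g v) (act g w) = \<beta> (T' v) (T' w) + \<beta>' v w"
    if "g \<in> carrier G" for g v w
    using that by (simp add: compatible_datum_intertwines[OF d'] \<alpha>'_closed \<beta>(4) \<beta>'(4))
  show "H2_mult G \<psi> \<psi>' \<in> H2 G"
    using H2_mult_closed[OF group.is_monoid[OF G] compatible_datum_H2[OF d] compatible_datum_H2[OF d']] .
qed


lemma compatible_datum_one:
  fixes scale :: "'k::field \<Rightarrow> 'v \<Rightarrow> 'v::ab_group_add"
  assumes G: "group G" and u: "u \<in> carrier G" and V: "vector_space scale"
  shows "compatible_datum G u scale act (datum_one G)"
  unfolding datum_one_def
proof (rule compatible_datumI)
  have k: "vector_space ((*) :: 'k \<Rightarrow> 'k \<Rightarrow> 'k)"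
    by unfold_locales (simp_all add: algebra_simps)
  show "restrict id (carrier G) \<in> iso G G"
    by (rule group.iso_eq[OF G id_iso]) simp
  show "Vector_Spaces.linear scale scale id"
    using vector_space.linear_id[OF V] .
  show zero: "Vector_Spaces.linear scale (*) (\<lambda>_. 0 :: 'k)"
    using V k by (simp add: Vector_Spaces.linear_iff)
  then show "Vector_Spaces.linear scale (*) (\<lambda>_. 0 :: 'k)" .
  show "H2_one G \<in> H2 G"
    using H2_one_closed[OF group.is_monoid[OF G]] .
qed (use u in auto)

lemma datum_mult_assoc:
  assumes G: "monoid G"
    and d: "compatible_datum G u scale act (T, \<beta>, \<alpha>, \<psi>)"
    and d': "compatible_datum G u scale act (T', \<beta>', \<alpha>', \<psi>')"
    and d'': "compatible_datum G u scale act (T'', \<beta>'', \<alpha>'', \<psi>'')"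
  shows "datum_mult G (datum_mult G (T, \<beta>, \<alpha>, \<psi>) (T', \<beta>', \<alpha>', \<psi>')) (T'', \<beta>'', \<alpha>'', \<psi>'')
    = datum_mult G (T, \<beta>, \<alpha>, \<psi>) (datum_mult G (T', \<beta>', \<alpha>', \<psi>') (T'', \<beta>'', \<alpha>'', \<psi>''))"
  using compose_assoc[OF iso_funcset[OF compatible_datum_automorphism(1)[OF d'']], of \<alpha> \<alpha>']
    H2_mult_assoc[OF G compatible_datum_H2[OF d] compatible_datum_H2[OF d'] compatible_datum_H2[OF d'']]
  by (simp add: comp_assoc add.assoc)

lemma datum_mult_one_left:
  assumes G: "monoid G" and d: "compatible_datum G u scale act (T, \<beta>, \<alpha>, \<psi>)"
  shows "datum_mult G (datum_one G) (T, \<beta>, \<alpha>, \<psi>) = (T, \<beta>, \<alpha>, \<psi>)"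
  using Id_compose[OF iso_funcset[OF compatible_datum_automorphism(1)[OF d]]
      compatible_datum_automorphism(2)[OF d], folded id_def]
    H2_one_mult[OF G compatible_datum_H2[OF d]]
  by (simp add: datum_one_def)

definition datum_inv :: "('g, 'm) monoid_scheme \<Rightarrow> ('v, 'k::field, 'g) datum \<Rightarrow> ('v, 'k, 'g) datum" where
  "datum_inv G d = (case d of (T, \<beta>, \<alpha>, \<psi>) \<Rightarrow>
     (inv_into UNIV T, (\<lambda>v w. - \<beta> (inv_into UNIV T v) (inv_into UNIV T w)),
      restrict (inv_into (carrier G) \<alpha>) (carrier G), inv\<^bsub>H2_group G\<^esub> \<psi>))"

lemma compatible_datum_inv:
  assumes G: "group G" and u: "u \<in> carrier G"
    and d: "compatible_datum G u scale act (T, \<beta>, \<alpha>, \<psi>)"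
  shows "compatible_datum G u scale act (datum_inv G (T, \<beta>, \<alpha>, \<psi>))"
  unfolding datum_inv_def prod.case
proof (rule compatible_datumI)
  note \<alpha> = compatible_datum_automorphism[OF d]
  note T = compatible_datum_linear[OF d]
  note \<beta> = compatible_datum_form[OF d]
  have \<alpha>_bij: "bij_betw \<alpha> (carrier G) (carrier G)"
    using \<alpha>(1) by (simp add: iso_def)
  let ?T = "inv_into UNIV T"
  have T_inv: "?T (act g v) = act (inv_into (carrier G) \<alpha> g) (?T v)" if "g \<in> carrier G" for g v
    using inv_into_intertwines[OF T(2), of g \<alpha> "carrier G" act] compatible_datum_intertwines[OF d]
      bij_betw_imp_surj_on[OF \<alpha>_bij] that by blast
  have \<alpha>_inv: "inv_into (carrier G) \<alpha> g \<in> carrier G" if "g \<in> carrier G" for g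
    using bij_betwE[OF bij_betw_inv_into[OF \<alpha>_bij]] that by blast
  show "restrict (inv_into (carrier G) \<alpha>) (carrier G) \<in> iso G G"
    using group.iso_eq[OF G group.iso_set_sym[OF G \<alpha>(1)]] by simp
  show "restrict (inv_into (carrier G) \<alpha>) (carrier G) u = u"
    using u \<alpha>(3) inv_into_f_f[OF bij_betw_imp_inj_on[OF \<alpha>_bij] u] by simp
  show "Vector_Spaces.linear scale scale ?T"
    using linear_inv[OF T] .
  show "bij ?T"
    using bij_imp_bij_inv[OF T(2)] .
  show "?T (act g v) = act (restrict (inv_into (carrier G) \<alpha>) (carrier G) g) (?T v)"
    if "g \<in> carrier G" for g v
    using T_inv[OF that] that by simp
  show "Vector_Spaces.linear scale (*) (\<lambda>w. - \<beta> (?T v) (?T w))" for v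
    using linear_neg[OF Vector_Spaces.linear_compose[OF linear_inv[OF T] \<beta>(2)]] by (simp add: comp_def)
  show "Vector_Spaces.linear scale (*) (\<lambda>v. - \<beta> (?T v) (?T w))" for w
    using linear_neg[OF Vector_Spaces.linear_compose[OF linear_inv[OF T] \<beta>(3)]] by (simp add: comp_def)
  show "- \<beta> (?T (act g v)) (?T (act g w)) = - \<beta> (?T v) (?T w)" if "g \<in> carrier G" for g v w
    using that by (simp add: T_inv \<alpha>_inv \<beta>(4))
  show "- \<beta> (?T v) (?T w) = - \<beta> (?T w) (?T v)" for v w
    using \<beta>(1) by simp
  show "inv\<^bsub>H2_group G\<^esub> \<psi> \<in> H2 G"
    using H2_inv_closed[OF group.is_monoid[OF G] compatible_datum_H2[OF d]] .
qed simp

lemma datum_mult_inv_left: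
  assumes G: "group G" and d: "compatible_datum G u scale act (T, \<beta>, \<alpha>, \<psi>)"
  shows "datum_mult G (datum_inv G (T, \<beta>, \<alpha>, \<psi>)) (T, \<beta>, \<alpha>, \<psi>) = datum_one G"
proof -
  have "bij_betw \<alpha> (carrier G) (carrier G)"
    using compatible_datum_automorphism(1)[OF d] by (simp add: iso_def)
  moreover have "inj T"
    using bij_is_inj[OF compatible_datum_linear(2)[OF d]] .
  ultimately show ?thesis
    using compose_inv_into_id[of \<alpha> "carrier G" "carrier G", folded id_def]
      H2_inv_mult[OF group.is_monoid[OF G] compatible_datum_H2[OF d]]
    by (simp add: datum_inv_def datum_one_def inv_o_cancel)
qed

lemma group_compatible_data_monoid:
  fixes scale :: "'k::field \<Rightarrow> 'v \<Rightarrow> 'v::ab_group_add"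
  assumes G: "group G" and u: "u \<in> carrier G" and V: "vector_space scale"
  shows "group (compatible_data_monoid G u scale act)"
proof (rule groupI, unfold compatible_data_monoid_def partial_object.simps monoid.simps mem_Collect_eq)
  show "compatible_datum G u scale act (datum_one G)"
    using compatible_datum_one[OF G u V] .
  fix x y z
  assume x: "compatible_datum G u scale act x" and y: "compatible_datum G u scale act y"
    and z: "compatible_datum G u scale act z"
  show "compatible_datum G u scale act (datum_mult G x y)"
    using x y by (cases x rule: prod_cases4, cases y rule: prod_cases4)
      (simp only: compatible_datum_mult[OF G u])
  show "datum_mult G (datum_mult G x y) z = datum_mult G x (datum_mult G y z)"
    using x y z by (cases x rule: prod_cases4, cases y rule: prod_cases4, cases z rule: prod_cases4)
      (simp only: datum_mult_assoc[OF group.is_monoid[OF G]])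
next
  fix x assume x: "compatible_datum G u scale act x"
  show "datum_mult G (datum_one G) x = x"
    using x by (cases x rule: prod_cases4) (simp only: datum_mult_one_left[OF group.is_monoid[OF G]])
  show "\<exists>y\<in>{d. compatible_datum G u scale act d}. datum_mult G y x = datum_one G"
    using x by (cases x rule: prod_cases4)
      (metis mem_Collect_eq datum_mult_inv_left[OF G] compatible_datum_inv[OF G u])
qed

theorem lemma4p8:
  fixes G :: "('g, 'm) monoid_scheme" and u :: 'g
    and scale :: "'k::field_char_0 \<Rightarrow> 'v \<Rightarrow> 'v::ab_group_add"
    and act :: "'g \<Rightarrow> 'v \<Rightarrow> 'v"
    and d d' :: "('v, 'k, 'g) datum"
  assumes alg_closed: "\<forall>p :: 'k poly. degree p > 0 \<longrightarrow> (\<exists>x. poly p x = 0)"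
    and G: "comm_group G" and finG: "finite (carrier G)"
    and u: "u \<in> carrier G" and ord_u: "group.ord G u = 2"
    and V: "\<exists>B. finite_dimensional_vector_space scale B"
    and act_lin: "\<forall>g\<in>carrier G. Vector_Spaces.linear scale scale (act g)"
    and act_one: "act \<one>\<^bsub>G\<^esub> = id"
    and act_mult: "\<forall>g\<in>carrier G. \<forall>h\<in>carrier G. act (g \<otimes>\<^bsub>G\<^esub> h) = act g \<circ> act h"
    and act_u: "\<forall>v. act u v = - v"
    and d: "compatible_datum G u scale act d"
    and d': "compatible_datum G u scale act d'"
  shows "compatible_datum G u scale act (datum_mult G d d')
     \<and> group (compatible_data_monoid G u scale act)"
proof
  have G': "group G"
    using G by (rule comm_group.axioms(2))
  show "compatible_datum G u scale act (datum_mult G d d')"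
    using d d' by (cases d rule: prod_cases4, cases d' rule: prod_cases4)
      (simp only: compatible_datum_mult[OF G' u])
  from V obtain B where "finite_dimensional_vector_space scale B" ..
  then have "vector_space scale"
    by (rule finite_dimensional_vector_space.axioms(1))
  then show "group (compatible_data_monoid G u scale act)"
    by (rule group_compatible_data_monoid[OF G' u])
qed

end
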